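(* For every Turing degree $\boldsymbol{d}$, there exist equivalence relations $E$ and $F$ on $\omega$ such that $E$ is finitarily reducible to $F$ via a computable function, but there is no $\boldsymbol{d}$-computable reduction from $E$ to $F$.
   Context: For equivalence relations $E,F$ on $\omega$, a reduction from $E$ to $F$ is a function $g:\omega\to\omega$ with $x\,E\,y\iff g(x)\,F\,g(y)$ for all $x,y$; it is $\boldsymbol{d}$-computable if computable from a set of degree $\boldsymbol{d}$. $E$ is finitarily reducible to $F$ if there is one total computable function which, given $n\ge1$ and an $n$-tuple $(x_0,\dots,x_{n-1})\in\omega^n$, outputs an $n$-tuple $(y_0,\dots,y_{n-1})$ with $x_i\,E\,x_j\iff y_i\,F\,y_j$ for all $i<j<n$. *)

theory Defs
  imports Main "HOL-Library.Nat_Bijection"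
begin

text \<open>Codes for partial recursive functions relative to an oracle set.
  Functions act on argument lists (of varying arity).\<close>

datatype recf =
    Zero
  | Succ
  | Proj nat
  | Comp recf "recf list"
  | Prim recf recf
  | Mn recf
  | Orc

inductive eval :: "nat set \<Rightarrow> recf \<Rightarrow> nat list \<Rightarrow> nat \<Rightarrow> bool" for A where
  ev_zero: "eval A Zero xs 0"
| ev_succ: "eval A Succ (x # xs) (Suc x)"
| ev_proj: "i < length xs \<Longrightarrow> eval A (Proj i) xs (xs ! i)"
| ev_comp: "list_all2 (\<lambda>g z. eval A g xs z) gs zs \<Longrightarrow> eval A f zs y \<Longrightarrow> eval A (Comp f gs) xs y"
| ev_prim0: "eval A f xs y \<Longrightarrow> eval A (Prim f g) (0 # xs) y"
| ev_primS: "eval A (Prim f g) (n # xs) z \<Longrightarrow> eval A g (n # z # xs) y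
             \<Longrightarrow> eval A (Prim f g) (Suc n # xs) y"
| ev_mn: "eval A f (y # xs) 0 \<Longrightarrow> (\<forall>z<y. \<exists>w. eval A f (z # xs) w \<and> w \<noteq> 0)
          \<Longrightarrow> eval A (Mn f) xs y"
| ev_orc: "eval A Orc (x # xs) (if x \<in> A then 1 else 0)"

definition computable_in :: "nat set \<Rightarrow> (nat \<Rightarrow> nat) \<Rightarrow> bool" where
  "computable_in A g \<longleftrightarrow> (\<exists>c. \<forall>x. eval A c [x] (g x))"

definition computable :: "(nat \<Rightarrow> nat) \<Rightarrow> bool" where
  "computable g \<longleftrightarrow> computable_in {} g"

definition is_reduction :: "(nat \<times> nat) set \<Rightarrow> (nat \<times> nat) set \<Rightarrow> (nat \<Rightarrow> nat) \<Rightarrow> bool" where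
  "is_reduction E F g \<longleftrightarrow> (\<forall>x y. (x, y) \<in> E \<longleftrightarrow> (g x, g y) \<in> F)"

definition finitarily_reducible :: "(nat \<times> nat) set \<Rightarrow> (nat \<times> nat) set \<Rightarrow> bool" where
  "finitarily_reducible E F \<longleftrightarrow>
     (\<exists>h. computable h \<and>
        (\<forall>xs. xs \<noteq> [] \<longrightarrow>
           (let ys = list_decode (h (list_encode xs)) in
              length ys = length xs \<and>
              (\<forall>i j. i < j \<and> j < length xs \<longrightarrow>
                 ((xs ! i, xs ! j) \<in> E \<longleftrightarrow> (ys ! i, ys ! j) \<in> F)))))"

end

theory Submission
  imports Defs "HOL-Library.Countable" "HOL-Library.Infinite_Set"
begin

text \<open>Take \<open>E\<close> to be equality and \<open>F\<close> an equivalence relation whose classes have at most two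
  elements. A \<open>D\<close>-computable reduction of equality to \<open>F\<close> is an injection with pairwise
  \<open>F\<close>-inequivalent values, so \<open>F\<close> is built by diagonalisation: for the \<open>m\<close>-th \<open>D\<close>-computable
  function, if it is injective, two fresh values of it are made equivalent. The finitary reduction
  sends a tuple with code \<open>z\<close> to \<open>\<langle>z, x\<^sub>0\<rangle>, \<dots>, \<langle>z, x\<^sub>n\<^sub>-\<^sub>1\<rangle>\<close>, where all \<open>x\<^sub>i \<le> z\<close>. Such
  "siblings" are never made equivalent: every number has only finitely many siblings, while an
  injective function has infinitely many values to choose from.\<close>

lemma list_all2_functional:
  assumes "list_all2 (\<lambda>g z. P g z \<and> (\<forall>z'. P g z' \<longrightarrow> z = z')) gs zs" "list_all2 P gs zs'"
  shows "zs = zs'"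
  using assms
proof (induction gs arbitrary: zs zs')
  case (Cons g gs)
  then show ?case by (auto simp: list_all2_Cons1)
qed simp

lemma eval_deterministic: "eval A c xs y \<Longrightarrow> eval A c xs y' \<Longrightarrow> y = y'"
proof (induction arbitrary: y' rule: eval.induct)
  case (ev_comp xs gs zs f y)
  from ev_comp.prems obtain zs' where zs': "list_all2 (\<lambda>g z. eval A g xs z) gs zs'" "eval A f zs' y'"
    by (cases rule: eval.cases) auto
  have "zs = zs'"
    using list_all2_functional[OF ev_comp.IH(1) zs'(1)] .
  with zs'(2) ev_comp.IH(2) show ?case by simp
next
  case (ev_prim0 f xs y g)
  from ev_prim0.prems show ?case
    by (cases rule: eval.cases) (auto intro: ev_prim0.IH)
next
  case (ev_primS f g n xs z y)
  from ev_primS.prems show ?case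
    by (cases rule: eval.cases) (use ev_primS.IH in blast)
next
  case (ev_mn f y xs)
  from ev_mn.prems have y': "eval A f (y' # xs) 0 \<and> (\<forall>z<y'. \<exists>w. eval A f (z # xs) w \<and> w \<noteq> 0)"
    by (cases rule: eval.cases) simp
  show ?case
  proof (rule linorder_cases[of y y'])
    assume "y < y'"
    with y' ev_mn.IH(1) show ?thesis by fastforce
  next
    assume "y' < y"
    with y' ev_mn.IH(2) show ?thesis by fastforce
  qed
qed (auto elim: eval.cases)

definition recursive :: "nat \<Rightarrow> (nat list \<Rightarrow> nat) \<Rightarrow> bool" where
  "recursive k f \<longleftrightarrow> (\<exists>c. \<forall>xs. length xs = k \<longrightarrow> eval {} c xs (f xs))"

lemma recursive_cong:
  "recursive k f \<Longrightarrow> (\<And>xs. length xs = k \<Longrightarrow> f xs = g xs) \<Longrightarrow> recursive k g"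
  unfolding recursive_def by metis

lemma recursive_zero: "recursive k (\<lambda>_. 0)"
  unfolding recursive_def by (auto intro: ev_zero)

lemma recursive_proj: "i < k \<Longrightarrow> recursive k (\<lambda>xs. xs ! i)"
  unfolding recursive_def by (auto intro: ev_proj)

lemma recursive_compose:
  assumes f: "recursive (length gs) f" and gs: "\<forall>g\<in>set gs. recursive k g"
  shows "recursive k (\<lambda>xs. f (map (\<lambda>g. g xs) gs))"
proof -
  obtain cf where cf: "\<forall>xs. length xs = length gs \<longrightarrow> eval {} cf xs (f xs)"
    using f unfolding recursive_def by blast
  from gs obtain C where C: "\<forall>g\<in>set gs. \<forall>xs. length xs = k \<longrightarrow> eval {} (C g) xs (g xs)"
    unfolding recursive_def by metis
  show ?thesis unfolding recursive_def
  proof (intro exI allI impI)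
    fix xs :: "nat list" assume "length xs = k"
    with C have "list_all2 (\<lambda>c z. eval {} c xs z) (map C gs) (map (\<lambda>g. g xs) gs)"
      by (simp add: list_all2_conv_all_nth)
    with cf show "eval {} (Comp cf (map C gs)) xs (f (map (\<lambda>g. g xs) gs))"
      by (simp add: ev_comp)
  qed
qed

lemma recursive_compose1: "recursive 1 f \<Longrightarrow> recursive k a \<Longrightarrow> recursive k (\<lambda>xs. f [a xs])"
  using recursive_compose[where gs = "[a]"] by simp

lemma recursive_compose2:
  "recursive 2 f \<Longrightarrow> recursive k a \<Longrightarrow> recursive k b \<Longrightarrow> recursive k (\<lambda>xs. f [a xs, b xs])"
  using recursive_compose[where gs = "[a, b]"] by (simp add: numeral_2_eq_2)

lemma recursive_Suc: "recursive k f \<Longrightarrow> recursive k (\<lambda>xs. Suc (f xs))"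
proof -
  have "recursive 1 (\<lambda>xs. Suc (hd xs))"
    unfolding recursive_def by (rule exI[of _ Succ]) (auto simp: length_Suc_conv intro: ev_succ)
  then show "recursive k f \<Longrightarrow> recursive k (\<lambda>xs. Suc (f xs))"
    using recursive_compose1 by fastforce
qed

lemma recursive_cons: "recursive (Suc k) f \<Longrightarrow> recursive k a \<Longrightarrow> recursive k (\<lambda>xs. f (a xs # xs))"
proof -
  assume "recursive (Suc k) f" "recursive k a"
  then have "recursive k (\<lambda>xs. f (a xs # map (\<lambda>i. xs ! i) [0..<k]))"
    using recursive_compose[where gs = "a # map (\<lambda>i xs. xs ! i) [0..<k]"]
    by (simp add: comp_def recursive_proj)
  then show ?thesis
  proof (rule recursive_cong)
    fix xs :: "nat list" assume "length xs = k"
    with map_nth[of xs] show "f (a xs # map (\<lambda>i. xs ! i) [0..<k]) = f (a xs # xs)"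
      by simp
  qed
qed

lemma recursive_drop:
  "recursive k f \<Longrightarrow> recursive (j + k) (\<lambda>ys. f (drop j ys))"
proof -
  assume "recursive k f"
  then have "recursive (j + k) (\<lambda>ys. f (map (\<lambda>i. ys ! (j + i)) [0..<k]))"
    using recursive_compose[where gs = "map (\<lambda>i ys. ys ! (j + i)) [0..<k]" and k = "j + k"]
    by (simp add: comp_def recursive_proj)
  then show ?thesis
  proof (rule recursive_cong)
    show "f (map (\<lambda>i. ys ! (j + i)) [0..<k]) = f (drop j ys)" if "length ys = j + k" for ys
      using that by (intro arg_cong[where f = f] nth_equalityI) auto
  qed
qed

lemma recursive_rec_nat:
  assumes f: "recursive k f" and g: "recursive (Suc (Suc k)) g" and n: "recursive k n"
  shows "recursive k (\<lambda>xs. rec_nat (f xs) (\<lambda>m r. g (m # r # xs)) (n xs))"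
proof -
  obtain cf cg where cf: "\<forall>xs. length xs = k \<longrightarrow> eval {} cf xs (f xs)"
    and cg: "\<forall>ys. length ys = Suc (Suc k) \<longrightarrow> eval {} cg ys (g ys)"
    using f g unfolding recursive_def by blast
  have prim: "eval {} (Prim cf cg) (m # xs) (rec_nat (f xs) (\<lambda>m r. g (m # r # xs)) m)"
    if "length xs = k" for m xs
    using that by (induction m) (simp_all add: cf cg ev_prim0 ev_primS)
  have "recursive (Suc k) (\<lambda>ys. rec_nat (f (tl ys)) (\<lambda>m r. g (m # r # tl ys)) (hd ys))"
    unfolding recursive_def
  proof (intro exI allI impI)
    fix ys :: "nat list" assume "length ys = Suc k"
    then obtain m xs where "ys = m # xs" "length xs = k" by (cases ys) auto
    with prim show "eval {} (Prim cf cg) ys (rec_nat (f (tl ys)) (\<lambda>m r. g (m # r # tl ys)) (hd ys))"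
      by simp
  qed
  from recursive_cons[OF this n] show ?thesis by simp
qed

lemma recursive_funpow:
  assumes f: "recursive (Suc k) f" and n: "recursive k n" and s: "recursive k s"
  shows "recursive k (\<lambda>xs. ((\<lambda>r. f (r # xs)) ^^ n xs) (s xs))"
proof -
  have funpow_rec_nat: "rec_nat s0 (\<lambda>m r. h r) m = (h ^^ m) s0" for s0 h and m :: nat
    by (induction m) simp_all
  have "recursive (Suc (Suc k)) (\<lambda>ys. f (drop 1 ys))"
    using recursive_drop[OF f, of 1] by simp
  from recursive_rec_nat[OF s this n] show ?thesis
    by (simp add: funpow_rec_nat)
qed

lemma recursive_minimize:
  assumes f: "recursive (Suc k) f" and ex: "\<And>xs. length xs = k \<Longrightarrow> \<exists>y. f (y # xs) = 0"
  shows "recursive k (\<lambda>xs. LEAST y. f (y # xs) = 0)"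
proof -
  obtain cf where cf: "\<forall>ys. length ys = Suc k \<longrightarrow> eval {} cf ys (f ys)"
    using f unfolding recursive_def by blast
  show ?thesis unfolding recursive_def
  proof (intro exI allI impI)
    fix xs :: "nat list" assume xs: "length xs = k"
    let ?y = "LEAST y. f (y # xs) = 0"
    have eval_f: "eval {} cf (z # xs) (f (z # xs))" for z
      using cf xs by simp
    have "f (?y # xs) = 0" using ex[OF xs] by (rule LeastI_ex)
    moreover have "f (z # xs) \<noteq> 0" if "z < ?y" for z using that by (rule not_less_Least)
    ultimately show "eval {} (Mn cf) xs ?y"
      using eval_f by (intro ev_mn) (metis, blast)
  qed
qed

lemma recursive_add: "recursive k a \<Longrightarrow> recursive k b \<Longrightarrow> recursive k (\<lambda>xs. a xs + b xs)"
proof -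
  assume a: "recursive k a" and b: "recursive k b"
  have eq: "rec_nat y (\<lambda>m r. Suc r) x = x + y" for x y :: nat
    by (induction x) simp_all
  have g: "recursive (Suc (Suc k)) (\<lambda>ys. Suc (ys ! 1))"
    by (intro recursive_Suc recursive_proj) simp
  from recursive_rec_nat[OF b g a] show ?thesis
    by (rule recursive_cong) (use eq in simp)
qed

lemma recursive_pred: "recursive k a \<Longrightarrow> recursive k (\<lambda>xs. a xs - 1)"
proof -
  assume a: "recursive k a"
  have eq: "rec_nat 0 (\<lambda>m r. m) x = x - 1" for x :: nat
    by (cases x) simp_all
  have g: "recursive (Suc (Suc k)) (\<lambda>ys. ys ! 0)"
    by (intro recursive_proj) simp
  from recursive_rec_nat[OF recursive_zero g a] show ?thesis
    by (rule recursive_cong) (use eq in simp)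
qed

lemma recursive_diff: "recursive k a \<Longrightarrow> recursive k b \<Longrightarrow> recursive k (\<lambda>xs. a xs - b xs)"
proof -
  assume a: "recursive k a" and b: "recursive k b"
  have eq: "rec_nat x (\<lambda>m r. r - 1) y = x - y" for x y :: nat
    by (induction y) simp_all
  have g: "recursive (Suc (Suc k)) (\<lambda>ys. ys ! 1 - 1)"
    by (intro recursive_pred recursive_proj) simp
  from recursive_rec_nat[OF a g b] show ?thesis
    by (rule recursive_cong) (use eq in simp)
qed

lemma recursive_if_zero:
  "recursive k c \<Longrightarrow> recursive k a \<Longrightarrow> recursive k b \<Longrightarrow>
    recursive k (\<lambda>xs. if c xs = 0 then a xs else b xs)"
proof -
  assume c: "recursive k c" and a: "recursive k a" and b: "recursive k b"
  have eq: "rec_nat x (\<lambda>m r. y) z = (if z = 0 then x else y)" for x y z :: nat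
    by (cases z) simp_all
  have g: "recursive (Suc (Suc k)) (\<lambda>ys. b (drop 2 ys))"
    using recursive_drop[OF b, of 2] by simp
  from recursive_rec_nat[OF a g c] show ?thesis
    by (rule recursive_cong) (use eq in simp)
qed

lemma recursive_triangle: "recursive k a \<Longrightarrow> recursive k (\<lambda>xs. triangle (a xs))"
proof -
  assume a: "recursive k a"
  have eq: "rec_nat 0 (\<lambda>m r. r + Suc m) x = triangle x" for x
    by (induction x) simp_all
  have g: "recursive (Suc (Suc k)) (\<lambda>ys. ys ! 1 + Suc (ys ! 0))"
    by (intro recursive_add recursive_Suc recursive_proj) simp_all
  from recursive_rec_nat[OF recursive_zero g a] show ?thesis
    by (rule recursive_cong) (use eq in simp)
qed

lemma triangle_mono: "m \<le> n \<Longrightarrow> triangle m \<le> triangle n"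
  by (induction n) (auto simp: le_Suc_eq)

text \<open>The index of the diagonal of the Cantor pairing on which \<open>w\<close> lies; it reduces decoding to
  arithmetic.\<close>

definition triangle_root :: "nat \<Rightarrow> nat" where
  "triangle_root w = (LEAST s. w < triangle (Suc s))"

lemma triangle_root_prod_encode: "triangle_root (prod_encode (a, b)) = a + b"
  unfolding triangle_root_def
proof (rule Least_equality)
  show "prod_encode (a, b) < triangle (Suc (a + b))"
    by (simp add: prod_encode_def)
  show "a + b \<le> s" if "prod_encode (a, b) < triangle (Suc s)" for s
  proof (rule ccontr)
    assume "\<not> a + b \<le> s"
    then have "triangle (Suc s) \<le> triangle (a + b)"
      by (intro triangle_mono) simp
    with that show False by (simp add: prod_encode_def)
  qed
qed

lemma fst_prod_decode: "fst (prod_decode w) = w - triangle (triangle_root w)"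
  and snd_prod_decode: "snd (prod_decode w) = triangle_root w - fst (prod_decode w)"
proof -
  obtain a b where w: "w = prod_encode (a, b)"
    by (metis prod_decode_inverse surj_pair)
  then have "triangle_root w = a + b" "fst (prod_decode w) = a" "snd (prod_decode w) = b"
    by (simp_all add: triangle_root_prod_encode)
  with w show "fst (prod_decode w) = w - triangle (triangle_root w)"
    and "snd (prod_decode w) = triangle_root w - fst (prod_decode w)"
    by (simp_all add: prod_encode_def)
qed

lemma recursive_triangle_root: "recursive k a \<Longrightarrow> recursive k (\<lambda>xs. triangle_root (a xs))"
proof -
  assume a: "recursive k a"
  have f: "recursive (Suc k) (\<lambda>ys. Suc (a (drop 1 ys)) - triangle (Suc (ys ! 0)))"
    using recursive_drop[OF a, of 1]
    by (intro recursive_diff recursive_Suc recursive_triangle recursive_proj) simp_all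
  have "\<exists>s. Suc (a (drop 1 (s # xs))) - triangle (Suc ((s # xs) ! 0)) = 0" for xs
    using triangle_mono[of "Suc (a xs)" "Suc (Suc (a xs))"] by (intro exI[of _ "a xs"]) simp
  then have "recursive k (\<lambda>xs. LEAST s. Suc (a (drop 1 (s # xs))) - triangle (Suc ((s # xs) ! 0)) = 0)"
    by (intro recursive_minimize[OF f])
  then show ?thesis
    by (rule recursive_cong) (simp add: triangle_root_def less_Suc_eq_le)
qed

lemma recursive_prod_encode:
  "recursive k a \<Longrightarrow> recursive k b \<Longrightarrow> recursive k (\<lambda>xs. prod_encode (a xs, b xs))"
  unfolding prod_encode_def by (simp add: recursive_add recursive_triangle)

lemma recursive_fst_prod_decode: "recursive k a \<Longrightarrow> recursive k (\<lambda>xs. fst (prod_decode (a xs)))"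
  unfolding fst_prod_decode by (intro recursive_diff recursive_triangle recursive_triangle_root)

lemma recursive_snd_prod_decode: "recursive k a \<Longrightarrow> recursive k (\<lambda>xs. snd (prod_decode (a xs)))"
  unfolding snd_prod_decode by (intro recursive_diff recursive_triangle_root recursive_fst_prod_decode)

text \<open>A state \<open>\<langle>w, acc\<rangle>\<close> holds the code \<open>w\<close> of the list still to be processed and the code \<open>acc\<close>
  of the reversed output so far; recall \<open>list_encode (x # xs) = Suc \<langle>x, list_encode xs\<rangle>\<close>.\<close>

definition map_step :: "(nat \<Rightarrow> nat \<Rightarrow> nat) \<Rightarrow> nat \<Rightarrow> nat \<Rightarrow> nat" where
  "map_step F z s =
    (if fst (prod_decode s) = 0 then s
     else prod_encode (snd (prod_decode (fst (prod_decode s) - 1)),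
       Suc (prod_encode (F z (fst (prod_decode (fst (prod_decode s) - 1))), snd (prod_decode s)))))"

lemma map_step_Nil: "map_step F z (prod_encode (0, acc)) = prod_encode (0, acc)"
  by (simp add: map_step_def)

lemma map_step_Cons:
  "map_step F z (prod_encode (list_encode (x # xs), acc)) =
    prod_encode (list_encode xs, Suc (prod_encode (F z x, acc)))"
  by (simp add: map_step_def)

lemma funpow_map_step:
  "length xs \<le> n \<Longrightarrow>
    (map_step F z ^^ n) (prod_encode (list_encode xs, list_encode acc)) =
    prod_encode (0, list_encode (rev (map (F z) xs) @ acc))"
proof (induction xs arbitrary: n acc)
  case Nil
  have "(map_step F z ^^ n) (prod_encode (0, a)) = prod_encode (0, a)" for a
    by (induction n) (simp_all add: map_step_Nil)
  then show ?case by simp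
next
  case (Cons x xs)
  then obtain m where "n = Suc m" "length xs \<le> m"
    by (cases n) auto
  then show ?case
    using Cons.IH[of m "F z x # acc"] by (simp only: funpow_Suc_right comp_apply map_step_Cons) simp
qed

definition rev_map_code :: "(nat \<Rightarrow> nat \<Rightarrow> nat) \<Rightarrow> nat \<Rightarrow> nat \<Rightarrow> nat" where
  "rev_map_code F z w = snd (prod_decode ((map_step F z ^^ z) (prod_encode (w, 0))))"

lemma rev_map_code_list_encode:
  "length xs \<le> z \<Longrightarrow> rev_map_code F z (list_encode xs) = list_encode (rev (map (F z) xs))"
  using funpow_map_step[of xs z F z "[]"] by (simp add: rev_map_code_def)

lemma list_encode_Cons_ge: "x \<le> list_encode (x # xs)" "list_encode xs < list_encode (x # xs)"
  by (simp_all add: le_SucI[OF le_prod_encode_1] le_imp_less_Suc[OF le_prod_encode_2])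

lemma length_le_list_encode: "length xs \<le> list_encode xs"
proof (induction xs)
  case (Cons x xs)
  with list_encode_Cons_ge(2)[of xs x] show ?case
    by simp
qed simp

lemma elem_le_list_encode: "x \<in> set xs \<Longrightarrow> x \<le> list_encode xs"
proof (induction xs)
  case (Cons y xs)
  with list_encode_Cons_ge[where x = y and xs = xs] show ?case
    by (auto simp del: list_encode.simps)
qed simp

lemma recursive_map_step:
  assumes F: "recursive 2 (\<lambda>ys. F (ys ! 0) (ys ! 1))" and z: "recursive k z" and s: "recursive k s"
  shows "recursive k (\<lambda>xs. map_step F (z xs) (s xs))"
proof -
  let ?w = "\<lambda>xs. fst (prod_decode (s xs)) - 1"
  have w: "recursive k ?w"
    using s by (intro recursive_pred recursive_fst_prod_decode)
  have "recursive k (\<lambda>xs. F (z xs) (fst (prod_decode (?w xs))))"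
    using recursive_compose2[OF F z recursive_fst_prod_decode[OF w]] by simp
  then show ?thesis
    unfolding map_step_def using s w
    by (intro recursive_if_zero recursive_fst_prod_decode recursive_prod_encode
        recursive_snd_prod_decode recursive_Suc)
qed

lemma recursive_rev_map_code:
  assumes F: "recursive 2 (\<lambda>ys. F (ys ! 0) (ys ! 1))" and z: "recursive k z" and w: "recursive k w"
  shows "recursive k (\<lambda>xs. rev_map_code F (z xs) (w xs))"
proof -
  have "recursive (Suc k) (\<lambda>ys. map_step F (z (drop 1 ys)) (ys ! 0))"
    using recursive_drop[OF z, of 1] by (intro recursive_map_step[OF F] recursive_proj) simp_all
  from recursive_funpow[OF this z recursive_prod_encode[OF w recursive_zero]]
  show ?thesis
    unfolding rev_map_code_def by (intro recursive_snd_prod_decode) simp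
qed

definition tag_tuple :: "nat \<Rightarrow> nat" where
  "tag_tuple w = rev_map_code (\<lambda>_ x. x) w (rev_map_code (\<lambda>z x. prod_encode (z, x)) w w)"

lemma tag_tuple_list_encode:
  "tag_tuple (list_encode xs) = list_encode (map (\<lambda>x. prod_encode (list_encode xs, x)) xs)"
  using length_le_list_encode[of xs]
  by (simp add: tag_tuple_def rev_map_code_list_encode rev_map_code_list_encode[where xs = "rev _"])

lemma computable_tag_tuple: "computable tag_tuple"
proof -
  have "recursive 1 (\<lambda>xs. tag_tuple (xs ! 0))"
    unfolding tag_tuple_def
    by (intro recursive_rev_map_code recursive_prod_encode recursive_proj) simp_all
  then obtain c where "\<forall>xs. length xs = 1 \<longrightarrow> eval {} c xs (tag_tuple (xs ! 0))"
    unfolding recursive_def by blast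
  then have "eval {} c [x] (tag_tuple x)" for x
    by (metis length_Cons list.size(3) nth_Cons_0 One_nat_def)
  then show ?thesis
    unfolding computable_def computable_in_def by blast
qed

instance recf :: countable
  by countable_datatype

definition oracle_fn :: "nat set \<Rightarrow> nat \<Rightarrow> nat \<Rightarrow> nat" where
  "oracle_fn D m x = (SOME y. eval D (from_nat m) [x] y)"

lemma computable_in_range_oracle_fn: "computable_in D g \<Longrightarrow> g \<in> range (oracle_fn D)"
proof -
  assume "computable_in D g"
  then obtain c where c: "\<forall>x. eval D c [x] (g x)"
    unfolding computable_in_def by blast
  have "oracle_fn D (to_nat c) x = g x" for x
    unfolding oracle_fn_def from_nat_to_nat
  proof (rule some_equality)
    show "eval D c [x] (g x)" using c ..
    show "y = g x" if "eval D c [x] y" for y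
      using that c eval_deterministic by blast
  qed
  then show ?thesis by (metis rangeI ext)
qed

definition siblings :: "nat \<Rightarrow> nat \<Rightarrow> bool" where
  "siblings a b \<longleftrightarrow> (\<exists>z x y. x \<le> z \<and> y \<le> z \<and> a = prod_encode (z, x) \<and> b = prod_encode (z, y))"

lemma siblings_sym: "siblings a b \<Longrightarrow> siblings b a"
  unfolding siblings_def by blast

lemma finite_siblings: "finite {b. siblings a b}"
proof (rule finite_subset)
  show "{b. siblings a b} \<subseteq> (\<lambda>y. prod_encode (fst (prod_decode a), y)) ` {..fst (prod_decode a)}"
  proof
    fix b assume "b \<in> {b. siblings a b}"
    then obtain z x y where "y \<le> z" "a = prod_encode (z, x)" "b = prod_encode (z, y)"
      unfolding siblings_def by blast
    then show "b \<in> (\<lambda>y. prod_encode (fst (prod_decode a), y)) ` {..fst (prod_decode a)}"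
      by (intro image_eqI[of _ _ y]) simp_all
  qed
qed simp

definition fresh_pair :: "(nat \<Rightarrow> nat) \<Rightarrow> nat set \<Rightarrow> nat set \<Rightarrow> bool" where
  "fresh_pair g U p \<longleftrightarrow>
    (\<exists>x y. p = {g x, g y} \<and> g x \<noteq> g y \<and> \<not> siblings (g x) (g y)) \<and> disjnt p U"

lemma fresh_pair_exists:
  assumes g: "inj g" and U: "finite U"
  shows "\<exists>p. fresh_pair g U p"
proof -
  have inf: "infinite (range g)"
    using g by (rule range_inj_infinite)
  have "range g - U \<noteq> {}"
    using Diff_infinite_finite[OF U inf] by (rule infinite_imp_nonempty)
  then obtain x where x: "g x \<notin> U"
    by blast
  have "finite (insert (g x) (U \<union> {b. siblings (g x) b}))"
    using U finite_siblings by simp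
  from Diff_infinite_finite[OF this inf]
  have "range g - insert (g x) (U \<union> {b. siblings (g x) b}) \<noteq> {}"
    by (rule infinite_imp_nonempty)
  then obtain y where "g y \<notin> insert (g x) (U \<union> {b. siblings (g x) b})"
    by blast
  with x show ?thesis
    unfolding fresh_pair_def disjnt_def
    by (intro exI[of _ "{g x, g y}"] conjI exI[of _ x] exI[of _ y]) auto
qed

primrec diag_stage :: "nat set \<Rightarrow> nat \<Rightarrow> nat set list" where
  "diag_stage D 0 = []"
| "diag_stage D (Suc m) =
    (if inj (oracle_fn D m)
     then (SOME p. fresh_pair (oracle_fn D m) (\<Union>(set (diag_stage D m))) p) # diag_stage D m
     else diag_stage D m)"

definition diag_pairs :: "nat set \<Rightarrow> nat set set" where
  "diag_pairs D = (\<Union>m. set (diag_stage D m))"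

definition diag_rel :: "nat set \<Rightarrow> (nat \<times> nat) set" where
  "diag_rel D = {(x, y). x = y \<or> {x, y} \<in> diag_pairs D}"

definition separated :: "nat set set \<Rightarrow> bool" where
  "separated P \<longleftrightarrow> pairwise disjnt P \<and> (\<forall>p\<in>P. \<exists>a b. p = {a, b} \<and> a \<noteq> b \<and> \<not> siblings a b)"

lemma separated_insert:
  assumes "separated S" and "disjnt {a, b} (\<Union>S)" and "a \<noteq> b" and "\<not> siblings a b"
  shows "separated (insert {a, b} S)"
proof -
  have "disjnt {a, b} q" if "q \<in> S" for q
    using assms(2) Union_upper[OF that] by (rule disjnt_subset2)
  then have "pairwise disjnt (insert {a, b} S)"
    using assms(1) unfolding separated_def pairwise_insert by (simp add: disjnt_sym)
  with assms show ?thesis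
    unfolding separated_def by blast
qed

lemma finite_Union_separated: "separated S \<Longrightarrow> finite S \<Longrightarrow> finite (\<Union>S)"
  unfolding separated_def by (metis finite.emptyI finite.insertI finite_Union)

lemma separated_diag_stage: "separated (set (diag_stage D m))"
proof (induction m)
  case 0
  show ?case by (simp add: separated_def)
next
  case (Suc m)
  let ?S = "set (diag_stage D m)"
  let ?p = "SOME p. fresh_pair (oracle_fn D m) (\<Union>?S) p"
  show ?case
  proof (cases "inj (oracle_fn D m)")
    case True
    have "finite (\<Union>?S)"
      using Suc.IH by (simp add: finite_Union_separated)
    with True have "fresh_pair (oracle_fn D m) (\<Union>?S) ?p"
      using fresh_pair_exists by (metis someI_ex)
    then obtain a b where "?p = {a, b}" "a \<noteq> b" "\<not> siblings a b" "disjnt {a, b} (\<Union>?S)"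
      unfolding fresh_pair_def by metis
    with Suc.IH True show ?thesis
      by (simp add: separated_insert)
  next
    case False
    with Suc.IH show ?thesis by simp
  qed
qed

lemma separated_diag_pairs: "separated (diag_pairs D)"
proof -
  have "mono (\<lambda>m. set (diag_stage D m))"
    by (auto simp: mono_iff_le_Suc)
  then have "set (diag_stage D i) \<subseteq> set (diag_stage D j) \<or> set (diag_stage D j) \<subseteq> set (diag_stage D i)"
    for i j
    using nat_le_linear[of i j] monoD by blast
  then have "chain\<^sub>\<subseteq> (range (\<lambda>m. set (diag_stage D m)))"
    unfolding chain_subset_def by blast
  then have "pairwise disjnt (diag_pairs D)"
    unfolding diag_pairs_def using separated_diag_stage
    by (intro pairwise_chain_Union) (auto simp: separated_def)
  then show ?thesis
    using separated_diag_stage unfolding separated_def diag_pairs_def by blast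
qed

lemma equiv_pairs_rel:
  assumes "pairwise disjnt P"
  shows "equiv UNIV {(x, y). x = y \<or> {x, y} \<in> P}" (is "equiv UNIV ?R")
proof (rule equivI)
  show "?R \<subseteq> UNIV \<times> UNIV" by simp
  show "refl_on UNIV ?R"
    by (simp add: refl_on_def)
  show "sym ?R"
    by (auto simp: sym_def insert_commute)
  show "trans ?R"
  proof (rule transI)
    fix x y z assume "(x, y) \<in> ?R" "(y, z) \<in> ?R"
    then have xy: "x = y \<or> {x, y} \<in> P" and yz: "y = z \<or> {y, z} \<in> P"
      by simp_all
    show "(x, z) \<in> ?R"
    proof (cases "x = y \<or> y = z")
      case True
      with xy yz show ?thesis by auto
    next
      case False
      with xy yz have "{x, y} \<in> P" "{y, z} \<in> P" by simp_all
      moreover have "\<not> disjnt {x, y} {y, z}"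
        by (simp add: disjnt_def)
      ultimately have "{x, y} = {y, z}"
        using assms by (meson pairwiseD)
      with False show ?thesis
        by (simp add: doubleton_eq_iff)
    qed
  qed
qed

lemma equiv_diag_rel: "equiv UNIV (diag_rel D)"
  unfolding diag_rel_def using separated_diag_pairs separated_def equiv_pairs_rel by blast

lemma diag_rel_siblings:
  assumes "(a, b) \<in> diag_rel D" and "siblings a b"
  shows "a = b"
proof (rule ccontr)
  assume "a \<noteq> b"
  with assms(1) have "{a, b} \<in> diag_pairs D"
    unfolding diag_rel_def by simp
  then obtain c d where "{a, b} = {c, d}" "\<not> siblings c d"
    using separated_diag_pairs unfolding separated_def by blast
  with assms(2) show False
    using siblings_sym by (auto simp: doubleton_eq_iff)
qed

lemma finitarily_reducible_Id_diag_rel: "finitarily_reducible Id (diag_rel D)"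
  unfolding finitarily_reducible_def
proof (intro exI conjI allI impI)
  show "computable tag_tuple" by (rule computable_tag_tuple)
  fix xs :: "nat list"
  let ?ys = "map (\<lambda>x. prod_encode (list_encode xs, x)) xs"
  have "(xs ! i = xs ! j) = ((?ys ! i, ?ys ! j) \<in> diag_rel D)" if "i < length xs" "j < length xs" for i j
  proof
    have "siblings (?ys ! i) (?ys ! j)"
      using that elem_le_list_encode nth_mem unfolding siblings_def by fastforce
    then show "(?ys ! i, ?ys ! j) \<in> diag_rel D \<Longrightarrow> xs ! i = xs ! j"
      using that diag_rel_siblings[of "?ys ! i" "?ys ! j" D] by simp
  qed (use that in \<open>simp add: diag_rel_def\<close>)
  then show "let ys = list_decode (tag_tuple (list_encode xs)) in length ys = length xs \<and>
    (\<forall>i j. i < j \<and> j < length xs \<longrightarrow> ((xs ! i, xs ! j) \<in> Id) = ((ys ! i, ys ! j) \<in> diag_rel D))"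
    by (simp add: tag_tuple_list_encode)
qed

lemma no_reduction_Id_diag_rel: "\<not> (\<exists>g. computable_in D g \<and> is_reduction Id (diag_rel D) g)"
proof
  assume "\<exists>g. computable_in D g \<and> is_reduction Id (diag_rel D) g"
  then obtain m where red: "is_reduction Id (diag_rel D) (oracle_fn D m)"
    using computable_in_range_oracle_fn by blast
  let ?g = "oracle_fn D m"
  let ?p = "SOME p. fresh_pair ?g (\<Union>(set (diag_stage D m))) p"
  have red': "x = y" if "(?g x, ?g y) \<in> diag_rel D" for x y
    using red that unfolding is_reduction_def by simp
  have "inj ?g"
    by (rule injI) (rule red', simp add: diag_rel_def)
  moreover have "finite (\<Union>(set (diag_stage D m)))"
    using separated_diag_stage by (simp add: finite_Union_separated)
  ultimately have "fresh_pair ?g (\<Union>(set (diag_stage D m))) ?p"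
    using fresh_pair_exists by (metis someI_ex)
  then obtain x y where "?p = {?g x, ?g y}" "?g x \<noteq> ?g y"
    unfolding fresh_pair_def by blast
  moreover have "?p \<in> diag_pairs D"
    using \<open>inj ?g\<close> unfolding diag_pairs_def by (auto intro!: exI[of _ "Suc m"])
  ultimately have "(?g x, ?g y) \<in> diag_rel D"
    unfolding diag_rel_def by simp
  with \<open>?g x \<noteq> ?g y\<close> show False
    using red' by blast
qed

theorem corollary3p8:
  fixes D :: "nat set"
  shows "\<exists>E F :: (nat \<times> nat) set.
           equiv UNIV E \<and> equiv UNIV F \<and>
           finitarily_reducible E F \<and>
           \<not> (\<exists>g. computable_in D g \<and> is_reduction E F g)"
proof (intro exI conjI)
  show "equiv UNIV (Id :: (nat \<times> nat) set)"
    by (rule equivI) (auto simp: refl_on_def sym_def trans_def)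
  show "equiv UNIV (diag_rel D)" by (rule equiv_diag_rel)
  show "finitarily_reducible Id (diag_rel D)" by (rule finitarily_reducible_Id_diag_rel)
  show "\<not> (\<exists>g. computable_in D g \<and> is_reduction Id (diag_rel D) g)"
    by (rule no_reduction_Id_diag_rel)
qed

end
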